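(* Let $G$ be a finite abstract simplicial complex. Then $w(B(x))=1$ for every $x \in G$.
   Context: A finite abstract simplicial complex $G$ is a finite set of non-empty finite sets such that every non-empty subset of an element of $G$ is again in $G$. For $y\in G$, $w(y)=(-1)^{|y|-1}$, and for $A\subset G$, $w(A)=\sum_{y\in A}w(y)$. $G$ carries the finite topology whose basis consists of the stars $U(x)=\{y\in G : x\subset y\}$. The unit ball $B(x)$ is the closure of $U(x)$ in this topology, i.e. $B(x)=\{y\in G : y\subset z \text{ for some } z\in G \text{ with } x\subset z\}$. *)

theory Defs
  imports Main
begin

definition simplicial_complex :: "'a set set \<Rightarrow> bool" where
  "simplicial_complex G \<longleftrightarrow> finite G \<and>
     (\<forall>x\<in>G. x \<noteq> {} \<and> finite x) \<and>
     (\<forall>x\<in>G. \<forall>y. y \<subseteq> x \<and> y \<noteq> {} \<longrightarrow> y \<in> G)"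

definition wsimp :: "'a set \<Rightarrow> int" where
  "wsimp y = (-1) ^ (card y - 1)"

definition wset :: "'a set set \<Rightarrow> int" where
  "wset A = (\<Sum>y\<in>A. wsimp y)"

text \<open>Star U(x) and unit ball B(x) (closure of the star in the finite topology).\<close>
definition star :: "'a set set \<Rightarrow> 'a set \<Rightarrow> 'a set set" where
  "star G x = {y \<in> G. x \<subseteq> y}"

definition unit_ball :: "'a set set \<Rightarrow> 'a set \<Rightarrow> 'a set set" where
  "unit_ball G x = {y \<in> G. \<exists>z\<in>G. y \<subseteq> z \<and> x \<subseteq> z}"

end

theory Submission
  imports Defs
begin

text \<open>Pick a vertex v of x. The ball B(x) is a cone with apex v: adding v to a simplex
of B(x), or removing it from one other than {v}, stays inside B(x). Hence y \<mapsto> insert v y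
pairs the simplices of B(x) not containing v with those containing v other than {v}, and
paired simplices have opposite weights. Only the vertex {v} is left unpaired, so
w(B(x)) = w({v}) = 1.\<close>

lemma wsimp_insert:
  assumes "finite y" "y \<noteq> {}" "v \<notin> y"
  shows "wsimp (insert v y) = - wsimp y"
proof -
  have "card (insert v y) - 1 = Suc (card y - 1)"
    using assms by (simp add: Suc_leI card_gt_0_iff)
  then show ?thesis unfolding wsimp_def by simp
qed

lemma wset_cone:
  assumes "finite K" and simplices: "\<And>y. y \<in> K \<Longrightarrow> y \<noteq> {} \<and> finite y"
    and apex: "{v} \<in> K"
    and insert_apex: "\<And>y. y \<in> K \<Longrightarrow> insert v y \<in> K"
    and remove_apex: "\<And>y. y \<in> K \<Longrightarrow> y \<noteq> {v} \<Longrightarrow> y - {v} \<in> K"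
  shows "wset K = 1"
proof -
  define A where "A = {y \<in> K. v \<notin> y}"
  have A_sub: "A \<subseteq> K" unfolding A_def by auto
  have cone_part: "K \<inter> {y. v \<in> y} = insert {v} (insert v ` A)"
  proof (intro equalityI subsetI)
    fix y assume y: "y \<in> K \<inter> {y. v \<in> y}"
    show "y \<in> insert {v} (insert v ` A)"
    proof (cases "y = {v}")
      case False
      then have "y - {v} \<in> A" using y remove_apex unfolding A_def by auto
      moreover have "y = insert v (y - {v})" using y by auto
      ultimately show ?thesis by blast
    qed simp
  qed (use apex insert_apex A_sub in auto)
  have apex_unpaired: "{v} \<notin> insert v ` A"
    using simplices unfolding A_def by (auto simp: insert_ident)
  have inj: "inj_on (insert v) A"
    by (rule inj_onI) (auto simp: A_def insert_ident)
  have "finite A" using A_sub \<open>finite K\<close> finite_subset by blast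
  have "wset K = wset (K \<inter> {y. v \<in> y}) + wset A"
    unfolding wset_def A_def
    using sum.Int_Diff[OF \<open>finite K\<close>, of wsimp "{y. v \<in> y}"] by (simp add: set_diff_eq)
  also have "wset (K \<inter> {y. v \<in> y}) = wsimp {v} + (\<Sum>y\<in>A. wsimp (insert v y))"
    unfolding wset_def cone_part
    using \<open>finite A\<close> apex_unpaired by (simp add: sum.reindex[OF inj])
  also have "(\<Sum>y\<in>A. wsimp (insert v y)) = - wset A"
    unfolding wset_def
    using simplices A_sub by (auto simp: A_def wsimp_insert sum_negf[symmetric] intro: sum.cong)
  finally show ?thesis by (simp add: wsimp_def)
qed

theorem mainTheorem3:
  fixes G :: "'a set set"
  assumes "simplicial_complex G" and "x \<in> G"
  shows "wset (unit_ball G x) = 1"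
proof -
  have "finite G" and simplices: "\<And>y. y \<in> G \<Longrightarrow> y \<noteq> {} \<and> finite y"
    and faces: "\<And>y z. z \<in> G \<Longrightarrow> y \<subseteq> z \<Longrightarrow> y \<noteq> {} \<Longrightarrow> y \<in> G"
    using assms(1) unfolding simplicial_complex_def by blast+
  obtain v where "v \<in> x" using simplices[OF assms(2)] by blast
  show ?thesis
  proof (rule wset_cone)
    show "finite (unit_ball G x)"
      using \<open>finite G\<close> unfolding unit_ball_def by simp
    show "{v} \<in> unit_ball G x"
      using assms(2) \<open>v \<in> x\<close> faces[of x "{v}"] unfolding unit_ball_def by auto
    fix y assume "y \<in> unit_ball G x"
    then obtain z where z: "y \<in> G" "z \<in> G" "y \<subseteq> z" "x \<subseteq> z" unfolding unit_ball_def by auto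
    show "y \<noteq> {} \<and> finite y" using simplices z(1) .
    show "insert v y \<in> unit_ball G x"
      using z \<open>v \<in> x\<close> faces[of z "insert v y"] unfolding unit_ball_def by auto
    show "y - {v} \<in> unit_ball G x" if "y \<noteq> {v}"
      using z that simplices[of y] faces[of z "y - {v}"] unfolding unit_ball_def by auto
  qed
qed

end
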